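(* For every partition $\lambda$ with $k$ parts and every $D\subseteq\widehat{\mathrm{dg}}(\lambda)$, \[ F_{\lambda,D}(X;t)=G_{\widehat{\boldsymbol\nu}(\lambda,D)}(X;t). \]
   Context: Let $\lambda=(\lambda_1\ge\dots\ge\lambda_k>0)$ be a partition; $\mathrm{dg}(\lambda)=\{(r,i):1\le i\le k,\ 1\le r\le\lambda_i\}$ ($(r,i)$ = row $r$ from the bottom, column $i$ from the left, columns bottom-justified of heights $\lambda_i$). $\widehat{\mathrm{dg}}(\lambda)$ is the set of cells not in row 1. A filling is $\sigma:\mathrm{dg}(\lambda)\to\mathbb Z_{>0}$, $x^\sigma=\prod_u x_{\sigma(u)}$; $\mathrm{Des}(\sigma)$ is the set of cells $(r,i)$, $r>1$, with $\sigma((r,i))>\sigma((r-1,i))$. An ordered pair of cells $(u,v)$, $u=(r,i)$, $v=(r',j)$, is attacking if either $r=r'$ and $i>j$, or $r=r'+1$ and $i<j$; it is an attacking inversion if $\sigma(u)>\sigma(v)$; $\widehat{\mathrm{inv}}(\sigma)$ is their number. $F_{\lambda,D}(X;t)=\sum_{\sigma:\mathrm{Des}(\sigma)=D}t^{\widehat{\mathrm{inv}}(\sigma)}x^\sigma$. Ribbons: a ribbon of size $m$ with descent set $S\subseteq\{1,\dots,m-1\}$ has cells labelled $1,\dots,m$ from northwest to southeast, cell $i+1$ lying directly below cell $i$ if $i\in S$ and directly to the right of cell $i$ otherwise; cell $i$ is assigned the diagonal $d=m-i+1$. A semistandard filling $\rho$ of it assigns positive integers with $\rho(i)\le\rho(i+1)$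 if $i\notin S$ and $\rho(i)>\rho(i+1)$ if $i\in S$. For a tuple of ribbons $\boldsymbol\nu=(\nu^{(1)},\dots,\nu^{(k)})$ and a tuple $\boldsymbol\rho$ of semistandard fillings, an inversion is a pair of cells $u\in\nu^{(i)}$, $v\in\nu^{(j)}$ with $\rho^{(i)}(u)>\rho^{(j)}(v)$ and either ($i<j$ and $d(u)=d(v)$) or ($i>j$ and $d(u)=d(v)+1$). The LLT polynomial is $G_{\boldsymbol\nu}(X;t)=\sum_{\boldsymbol\rho}t^{\mathrm{inv}(\boldsymbol\rho)}x^{\boldsymbol\rho}$, $x^{\boldsymbol\rho}=\prod_i\prod_{u}x_{\rho^{(i)}(u)}$. Finally $\widehat{\boldsymbol\nu}(\lambda,D)=(\nu_k,\nu_{k-1},\dots,\nu_1)$ where $\nu_j$ is the ribbon of size $\lambda_j$ with descent set $\{\lambda_j-r+1:(r,j)\in D\}$. *)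

theory Defs
  imports Main "HOL-Library.Multiset"
begin

text \<open>Partitions as lists (lambda_1 >= ... >= lambda_k > 0); lambda_i = lam ! (i-1).
 Cells (r,i): row r from the bottom, column i from the left, both 1-indexed.\<close>

definition is_partition :: "nat list \<Rightarrow> bool" where
  "is_partition lam \<longleftrightarrow> sorted_wrt (\<ge>) lam \<and> (\<forall>x\<in>set lam. 0 < x)"

definition dg :: "nat list \<Rightarrow> (nat \<times> nat) set" where
  "dg lam = {(r,i). 1 \<le> i \<and> i \<le> length lam \<and> 1 \<le> r \<and> r \<le> lam ! (i-1)}"

definition dghat :: "nat list \<Rightarrow> (nat \<times> nat) set" where
  "dghat lam = {(r,i). (r,i) \<in> dg lam \<and> r \<noteq> 1}"

definition fillings :: "nat list \<Rightarrow> (nat \<times> nat \<Rightarrow> nat) set" where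
  "fillings lam = {\<sigma>. (\<forall>u\<in>dg lam. 0 < \<sigma> u) \<and> (\<forall>u. u \<notin> dg lam \<longrightarrow> \<sigma> u = 0)}"

definition Des :: "nat list \<Rightarrow> (nat \<times> nat \<Rightarrow> nat) \<Rightarrow> (nat \<times> nat) set" where
  "Des lam \<sigma> = {(r,i). (r,i) \<in> dg lam \<and> r > 1 \<and> \<sigma> (r,i) > \<sigma> (r-1,i)}"

definition attacking :: "nat \<times> nat \<Rightarrow> nat \<times> nat \<Rightarrow> bool" where
  "attacking u v \<longleftrightarrow> (fst u = fst v \<and> snd u > snd v) \<or> (fst u = fst v + 1 \<and> snd u < snd v)"

definition inv_hat :: "nat list \<Rightarrow> (nat \<times> nat \<Rightarrow> nat) \<Rightarrow> nat" where
  "inv_hat lam \<sigma> = card {(u,v). u \<in> dg lam \<and> v \<in> dg lam \<and> attacking u v \<and> \<sigma> u > \<sigma> v}"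

text \<open>The monomial x^sigma is encoded by the multiset of entries.
 A formal power series in X and t with natural coefficients is encoded by its
 coefficient function: (multiset of variable indices) => (power of t) => coefficient.\<close>
definition F_series :: "nat list \<Rightarrow> (nat \<times> nat) set \<Rightarrow> nat multiset \<Rightarrow> nat \<Rightarrow> nat" where
  "F_series lam D \<alpha> n = card {\<sigma> \<in> fillings lam. Des lam \<sigma> = D \<and> inv_hat lam \<sigma> = n
      \<and> image_mset \<sigma> (mset_set (dg lam)) = \<alpha>}"

text \<open>Ribbons: (size m, descent set S). A tuple of ribbons is a list; the i-th ribbon
 (1-indexed) is nus ! (i-1). Cells of the tuple are pairs (i,c), c the label in ribbon i.\<close>
type_synonym ribbon = "nat \<times> nat set"

definition rcells :: "ribbon list \<Rightarrow> (nat \<times> nat) set" where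
  "rcells nus = {(i,c). 1 \<le> i \<and> i \<le> length nus \<and> 1 \<le> c \<and> c \<le> fst (nus ! (i-1))}"

definition rdiag :: "ribbon list \<Rightarrow> nat \<times> nat \<Rightarrow> nat" where
  "rdiag nus u = fst (nus ! (fst u - 1)) - snd u + 1"

definition ssfillings :: "ribbon list \<Rightarrow> (nat \<times> nat \<Rightarrow> nat) set" where
  "ssfillings nus = {\<rho>. (\<forall>u\<in>rcells nus. 0 < \<rho> u) \<and> (\<forall>u. u \<notin> rcells nus \<longrightarrow> \<rho> u = 0) \<and>
     (\<forall>i c. 1 \<le> i \<and> i \<le> length nus \<and> 1 \<le> c \<and> c < fst (nus ! (i-1)) \<longrightarrow>
        (c \<in> snd (nus ! (i-1)) \<longrightarrow> \<rho> (i,c) > \<rho> (i,c+1)) \<and>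
        (c \<notin> snd (nus ! (i-1)) \<longrightarrow> \<rho> (i,c) \<le> \<rho> (i,c+1)))}"

definition inv_llt :: "ribbon list \<Rightarrow> (nat \<times> nat \<Rightarrow> nat) \<Rightarrow> nat" where
  "inv_llt nus \<rho> = card {(u,v). u \<in> rcells nus \<and> v \<in> rcells nus \<and> \<rho> u > \<rho> v \<and>
     ((fst u < fst v \<and> rdiag nus u = rdiag nus v) \<or> (fst u > fst v \<and> rdiag nus u = rdiag nus v + 1))}"

definition G_series :: "ribbon list \<Rightarrow> nat multiset \<Rightarrow> nat \<Rightarrow> nat" where
  "G_series nus \<alpha> n = card {\<rho> \<in> ssfillings nus. inv_llt nus \<rho> = n
      \<and> image_mset \<rho> (mset_set (rcells nus)) = \<alpha>}"

definition nu_hat :: "nat list \<Rightarrow> (nat \<times> nat) set \<Rightarrow> ribbon list" where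
  "nu_hat lam D = map (\<lambda>j. (lam ! (j-1), {lam ! (j-1) - r + 1 | r. (r,j) \<in> D})) (rev [1..<length lam + 1])"

end

theory Submission
  imports Defs
begin

text \<open>Reading the diagram column by column from right to left, and each column from top to
  bottom, identifies the cells of \<open>dg \<lambda>\<close> with the cells of the ribbon tuple
  \<open>\<nu>(\<lambda>,D)\<close>: ribbon \<open>i\<close> is column \<open>j = k - i + 1\<close>, and its cell \<open>c\<close> is the cell in row
  \<open>\<lambda>\<^sub>j - c + 1\<close> of that column, so the diagonal of a ribbon cell is the row of the corresponding diagram cell. Under this
  identification the LLT inversion pairs are exactly the attacking pairs, consecutive ribbon
  cells are vertically adjacent diagram cells, and a ribbon descent at \<open>c\<close> is the cell of \<open>D\<close>
  in that position. Hence transporting fillings along the identification is a bijection that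
  turns the descent condition \<open>Des \<sigma> = D\<close> into semistandardness and preserves weight and
  inversion number.\<close>

definition dg_cell :: "nat list \<Rightarrow> nat \<times> nat \<Rightarrow> nat \<times> nat" where
  "dg_cell lam u = (lam ! (length lam - fst u) - snd u + 1, length lam - fst u + 1)"

definition ribbon_cell :: "nat list \<Rightarrow> nat \<times> nat \<Rightarrow> nat \<times> nat" where
  "ribbon_cell lam v = (length lam - snd v + 1, lam ! (snd v - 1) - fst v + 1)"

lemma length_nu_hat: "length (nu_hat lam D) = length lam"
  by (simp add: nu_hat_def del: upt_Suc)

lemma nth_nu_hat:
  assumes "1 \<le> i" "i \<le> length lam"
  shows "nu_hat lam D ! (i - 1) = (lam ! (length lam - i),
     {lam ! (length lam - i) - r + 1 | r. (r, length lam - i + 1) \<in> D})"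
proof -
  have "rev [1..<length lam + 1] ! (i - 1) = length lam - i + 1"
    using assms by (simp add: rev_nth del: upt_Suc)
  moreover have "i - 1 < length (rev [1..<length lam + 1])"
    using assms by (simp del: upt_Suc)
  ultimately show ?thesis
    unfolding nu_hat_def by (simp del: upt_Suc)
qed

lemma rcells_nu_hat: "rcells (nu_hat lam D) =
   {(i,c). 1 \<le> i \<and> i \<le> length lam \<and> 1 \<le> c \<and> c \<le> lam ! (length lam - i)}"
  unfolding rcells_def using nth_nu_hat[of _ lam D] by (auto simp: length_nu_hat)

lemma dg_cell_in_dg: "u \<in> rcells (nu_hat lam D) \<Longrightarrow> dg_cell lam u \<in> dg lam"
  by (auto simp: rcells_nu_hat dg_cell_def dg_def)

lemma ribbon_cell_in_rcells: "v \<in> dg lam \<Longrightarrow> ribbon_cell lam v \<in> rcells (nu_hat lam D)"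
  by (auto simp: rcells_nu_hat ribbon_cell_def dg_def)

lemma ribbon_cell_dg_cell: "u \<in> rcells (nu_hat lam D) \<Longrightarrow> ribbon_cell lam (dg_cell lam u) = u"
  by (auto simp: rcells_nu_hat dg_cell_def ribbon_cell_def)

lemma dg_cell_ribbon_cell: "v \<in> dg lam \<Longrightarrow> dg_cell lam (ribbon_cell lam v) = v"
  by (auto simp: dg_def dg_cell_def ribbon_cell_def)

lemma bij_betw_dg_cell: "bij_betw (dg_cell lam) (rcells (nu_hat lam D)) (dg lam)"
  by (rule bij_betw_byWitness[where f' = "ribbon_cell lam"])
    (auto simp: dg_cell_in_dg ribbon_cell_in_rcells ribbon_cell_dg_cell dg_cell_ribbon_cell)

lemma llt_pair_iff_attacking:
  assumes "u \<in> rcells (nu_hat lam D)" "v \<in> rcells (nu_hat lam D)"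
  shows "(fst u < fst v \<and> rdiag (nu_hat lam D) u = rdiag (nu_hat lam D) v) \<or>
           (fst u > fst v \<and> rdiag (nu_hat lam D) u = rdiag (nu_hat lam D) v + 1)
     \<longleftrightarrow> attacking (dg_cell lam u) (dg_cell lam v)"
proof -
  have "rdiag (nu_hat lam D) w = fst (dg_cell lam w)" if "w \<in> rcells (nu_hat lam D)" for w
    using that nth_nu_hat[of "fst w" lam D] by (auto simp: rcells_nu_hat dg_cell_def rdiag_def)
  moreover have "fst u < fst v \<longleftrightarrow> snd (dg_cell lam u) > snd (dg_cell lam v)"
    "fst u > fst v \<longleftrightarrow> snd (dg_cell lam u) < snd (dg_cell lam v)"
    using assms by (auto simp: rcells_nu_hat dg_cell_def)
  ultimately show ?thesis
    using assms unfolding attacking_def by auto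
qed

lemma card_pairs_bij_betw:
  assumes "bij_betw g A B"
  shows "card {(u,v). u \<in> A \<and> v \<in> A \<and> P (g u) (g v)} = card {(x,y). x \<in> B \<and> y \<in> B \<and> P x y}"
proof -
  have "bij_betw (map_prod g g) {p \<in> A \<times> A. P (g (fst p)) (g (snd p))} {q \<in> B \<times> B. P (fst q) (snd q)}"
    by (rule bij_betw_Collect[OF bij_betw_map_prod[OF assms assms]]) auto
  then have "card {p \<in> A \<times> A. P (g (fst p)) (g (snd p))} = card {q \<in> B \<times> B. P (fst q) (snd q)}"
    by (rule bij_betw_same_card)
  moreover have "{p \<in> A \<times> A. P (g (fst p)) (g (snd p))} = {(u,v). u \<in> A \<and> v \<in> A \<and> P (g u) (g v)}"
    "{q \<in> B \<times> B. P (fst q) (snd q)} = {(x,y). x \<in> B \<and> y \<in> B \<and> P x y}"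
    by auto
  ultimately show ?thesis
    by simp
qed

definition ribbon_filling ::
    "nat list \<Rightarrow> (nat \<times> nat) set \<Rightarrow> (nat \<times> nat \<Rightarrow> nat) \<Rightarrow> nat \<times> nat \<Rightarrow> nat" where
  "ribbon_filling lam D \<sigma> u = (if u \<in> rcells (nu_hat lam D) then \<sigma> (dg_cell lam u) else 0)"

lemma bij_betw_ribbon_filling:
  "bij_betw (ribbon_filling lam D) (fillings lam)
     {\<rho>. (\<forall>u\<in>rcells (nu_hat lam D). 0 < \<rho> u) \<and> (\<forall>u. u \<notin> rcells (nu_hat lam D) \<longrightarrow> \<rho> u = 0)}"
proof (rule bij_betw_byWitness[where f' = "\<lambda>\<rho> v. if v \<in> dg lam then \<rho> (ribbon_cell lam v) else 0"])
  show "\<forall>\<sigma>\<in>fillings lam. (\<lambda>v. if v \<in> dg lam then ribbon_filling lam D \<sigma> (ribbon_cell lam v) else 0) = \<sigma>"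
    by (auto simp: fillings_def ribbon_filling_def ribbon_cell_in_rcells dg_cell_ribbon_cell)
  show "\<forall>\<rho>\<in>{\<rho>. (\<forall>u\<in>rcells (nu_hat lam D). 0 < \<rho> u) \<and> (\<forall>u. u \<notin> rcells (nu_hat lam D) \<longrightarrow> \<rho> u = 0)}.
      ribbon_filling lam D (\<lambda>v. if v \<in> dg lam then \<rho> (ribbon_cell lam v) else 0) = \<rho>"
    by (auto simp: ribbon_filling_def dg_cell_in_dg ribbon_cell_dg_cell)
  show "ribbon_filling lam D ` fillings lam
      \<subseteq> {\<rho>. (\<forall>u\<in>rcells (nu_hat lam D). 0 < \<rho> u) \<and> (\<forall>u. u \<notin> rcells (nu_hat lam D) \<longrightarrow> \<rho> u = 0)}"
    by (auto simp: fillings_def ribbon_filling_def dg_cell_in_dg)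
  show "(\<lambda>\<rho> v. if v \<in> dg lam then \<rho> (ribbon_cell lam v) else 0) `
      {\<rho>. (\<forall>u\<in>rcells (nu_hat lam D). 0 < \<rho> u) \<and> (\<forall>u. u \<notin> rcells (nu_hat lam D) \<longrightarrow> \<rho> u = 0)}
      \<subseteq> fillings lam"
    by (auto simp: fillings_def ribbon_cell_in_rcells)
qed

lemma weight_ribbon_filling:
  "image_mset (ribbon_filling lam D \<sigma>) (mset_set (rcells (nu_hat lam D)))
     = image_mset \<sigma> (mset_set (dg lam))"
proof -
  let ?R = "rcells (nu_hat lam D)"
  have "image_mset (ribbon_filling lam D \<sigma>) (mset_set ?R)
      = image_mset \<sigma> (image_mset (dg_cell lam) (mset_set ?R))"
    by (cases "finite ?R") (auto simp: ribbon_filling_def multiset.map_comp intro: image_mset_cong)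
  also have "image_mset (dg_cell lam) (mset_set ?R) = mset_set (dg lam)"
    using bij_betw_dg_cell[of lam D] by (simp add: bij_betw_def image_mset_mset_set)
  finally show ?thesis .
qed

lemma inv_llt_ribbon_filling:
  "inv_llt (nu_hat lam D) (ribbon_filling lam D \<sigma>) = inv_hat lam \<sigma>"
proof -
  let ?R = "rcells (nu_hat lam D)" and ?f = "ribbon_filling lam D \<sigma>" and ?g = "dg_cell lam"
  have "(u \<in> ?R \<and> v \<in> ?R \<and> ?f u > ?f v \<and>
      ((fst u < fst v \<and> rdiag (nu_hat lam D) u = rdiag (nu_hat lam D) v) \<or>
       (fst u > fst v \<and> rdiag (nu_hat lam D) u = rdiag (nu_hat lam D) v + 1)))
    \<longleftrightarrow> (u \<in> ?R \<and> v \<in> ?R \<and> attacking (?g u) (?g v) \<and> \<sigma> (?g u) > \<sigma> (?g v))" for u v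
  proof (cases "u \<in> ?R \<and> v \<in> ?R")
    case True
    then show ?thesis
      using llt_pair_iff_attacking[of u lam D v] unfolding ribbon_filling_def by auto
  qed auto
  then have "inv_llt (nu_hat lam D) ?f = card {(u,v). u \<in> ?R \<and> v \<in> ?R \<and>
      attacking (?g u) (?g v) \<and> \<sigma> (?g u) > \<sigma> (?g v)}"
    unfolding inv_llt_def by presburger
  also have "\<dots> = inv_hat lam \<sigma>"
    unfolding inv_hat_def by (rule card_pairs_bij_betw[OF bij_betw_dg_cell])
  finally show ?thesis .
qed

lemma Des_eq_iff:
  assumes "D \<subseteq> dghat lam"
  shows "Des lam \<sigma> = D \<longleftrightarrow>
    (\<forall>r j. (r,j) \<in> dg lam \<longrightarrow> 1 < r \<longrightarrow> ((r,j) \<in> D \<longleftrightarrow> \<sigma> (r - 1, j) < \<sigma> (r,j)))"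
    (is "_ \<longleftrightarrow> ?columns")
proof
  show "?columns" if "Des lam \<sigma> = D"
    using that unfolding Des_def by auto
  show "Des lam \<sigma> = D" if ?columns
  proof (rule set_eqI, clarify)
    fix r j
    have "(r,j) \<in> D \<Longrightarrow> (r,j) \<in> dg lam \<and> 1 < r"
      using assms unfolding dghat_def dg_def by auto
    then show "(r,j) \<in> Des lam \<sigma> \<longleftrightarrow> (r,j) \<in> D"
      using that unfolding Des_def by auto
  qed
qed

lemma ribbon_step_as_column_step:
  assumes "D \<subseteq> dghat lam" and "1 \<le> i" "i \<le> length lam" "1 \<le> c" "c < lam ! (length lam - i)"
  defines "j \<equiv> length lam - i + 1" and "r \<equiv> lam ! (length lam - i) - c + 1"
  shows "(r, j) \<in> dg lam" "1 < r"
    and "c \<in> snd (nu_hat lam D ! (i - 1)) \<longleftrightarrow> (r, j) \<in> D"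
    and "ribbon_filling lam D \<sigma> (i, c) = \<sigma> (r, j)"
    and "ribbon_filling lam D \<sigma> (i, c + 1) = \<sigma> (r - 1, j)"
proof -
  show "(r, j) \<in> dg lam" "1 < r"
    using assms(2-5) unfolding r_def j_def dg_def by auto
  have "lam ! (j - 1) = lam ! (length lam - i)"
    unfolding j_def by simp
  then have "c = lam ! (length lam - i) - r' + 1 \<longleftrightarrow> r' = r" if "(r', j) \<in> D" for r'
    using that assms(1,4,5) unfolding r_def dghat_def dg_def by auto
  then show "c \<in> snd (nu_hat lam D ! (i - 1)) \<longleftrightarrow> (r, j) \<in> D"
    using nth_nu_hat[OF assms(2,3), of D] unfolding j_def by auto
  have "dg_cell lam (i, c) = (r, j)" "dg_cell lam (i, c + 1) = (r - 1, j)"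
    using assms(5) unfolding dg_cell_def r_def j_def by auto
  moreover have "(i, c) \<in> rcells (nu_hat lam D)" "(i, c + 1) \<in> rcells (nu_hat lam D)"
    using assms(2-5) unfolding rcells_nu_hat by auto
  ultimately show "ribbon_filling lam D \<sigma> (i, c) = \<sigma> (r, j)"
    "ribbon_filling lam D \<sigma> (i, c + 1) = \<sigma> (r - 1, j)"
    unfolding ribbon_filling_def by simp_all
qed

lemma ssfillings_ribbon_filling_iff:
  assumes D: "D \<subseteq> dghat lam" and \<sigma>: "\<sigma> \<in> fillings lam"
  shows "ribbon_filling lam D \<sigma> \<in> ssfillings (nu_hat lam D) \<longleftrightarrow> Des lam \<sigma> = D"
proof -
  let ?k = "length lam" and ?f = "ribbon_filling lam D \<sigma>" and ?S = "\<lambda>i. snd (nu_hat lam D ! (i - 1))"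
  define step where "step i c \<longleftrightarrow> (c \<in> ?S i \<longrightarrow> ?f (i, c) > ?f (i, c + 1)) \<and>
    (c \<notin> ?S i \<longrightarrow> ?f (i, c) \<le> ?f (i, c + 1))" for i c
  have support: "(\<forall>u\<in>rcells (nu_hat lam D). 0 < ?f u) \<and> (\<forall>u. u \<notin> rcells (nu_hat lam D) \<longrightarrow> ?f u = 0)"
    using \<sigma> by (auto simp: fillings_def ribbon_filling_def dg_cell_in_dg)
  have "fst (nu_hat lam D ! (i - 1)) = lam ! (?k - i)" if "1 \<le> i" "i \<le> ?k" for i
    using nth_nu_hat[OF that] by simp
  then have "?f \<in> ssfillings (nu_hat lam D) \<longleftrightarrow>
      (\<forall>i c. 1 \<le> i \<and> i \<le> ?k \<and> 1 \<le> c \<and> c < lam ! (?k - i) \<longrightarrow> step i c)"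
    unfolding ssfillings_def step_def using support by (auto simp: length_nu_hat)
  also have "\<dots> \<longleftrightarrow>
      (\<forall>r j. (r,j) \<in> dg lam \<longrightarrow> 1 < r \<longrightarrow> ((r,j) \<in> D \<longleftrightarrow> \<sigma> (r - 1, j) < \<sigma> (r,j)))"
  proof
    assume steps: "\<forall>i c. 1 \<le> i \<and> i \<le> ?k \<and> 1 \<le> c \<and> c < lam ! (?k - i) \<longrightarrow> step i c"
    show "\<forall>r j. (r,j) \<in> dg lam \<longrightarrow> 1 < r \<longrightarrow> ((r,j) \<in> D \<longleftrightarrow> \<sigma> (r - 1, j) < \<sigma> (r,j))"
    proof (intro allI impI)
      fix r j assume rj: "(r,j) \<in> dg lam" "1 < r"
      define i where "i = ?k - j + 1"
      define c where "c = lam ! (j - 1) - r + 1"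
      have i: "1 \<le> i" "i \<le> ?k" "?k - i + 1 = j" "?k - i = j - 1"
        using rj unfolding i_def dg_def by auto
      have c: "1 \<le> c" "c < lam ! (?k - i)" "lam ! (?k - i) - c + 1 = r"
        using rj i(4) unfolding c_def dg_def by auto
      have "step i c"
        using steps i c by blast
      then show "(r,j) \<in> D \<longleftrightarrow> \<sigma> (r - 1, j) < \<sigma> (r,j)"
        using ribbon_step_as_column_step[OF D i(1,2) c(1,2)] unfolding step_def i(3) c(3)
        by auto
    qed
  next
    assume columns: "\<forall>r j. (r,j) \<in> dg lam \<longrightarrow> 1 < r \<longrightarrow> ((r,j) \<in> D \<longleftrightarrow> \<sigma> (r - 1, j) < \<sigma> (r,j))"
    show "\<forall>i c. 1 \<le> i \<and> i \<le> ?k \<and> 1 \<le> c \<and> c < lam ! (?k - i) \<longrightarrow> step i c"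
      using columns ribbon_step_as_column_step[OF D] unfolding step_def by auto
  qed
  also have "\<dots> \<longleftrightarrow> Des lam \<sigma> = D"
    using Des_eq_iff[OF D] by simp
  finally show ?thesis .
qed

theorem mainTheorem4:
  fixes lam :: "nat list" and D :: "(nat \<times> nat) set"
  assumes "is_partition lam" and "D \<subseteq> dghat lam"
  shows "F_series lam D = G_series (nu_hat lam D)"
proof (intro ext)
  fix \<alpha> n
  let ?\<nu> = "nu_hat lam D"
  let ?positive = "{\<rho>. (\<forall>u\<in>rcells ?\<nu>. 0 < \<rho> u) \<and> (\<forall>u. u \<notin> rcells ?\<nu> \<longrightarrow> \<rho> u = 0)}"
  let ?A = "{\<sigma> \<in> fillings lam. Des lam \<sigma> = D \<and> inv_hat lam \<sigma> = n \<and> image_mset \<sigma> (mset_set (dg lam)) = \<alpha>}"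
  let ?B = "{\<rho> \<in> ssfillings ?\<nu>. inv_llt ?\<nu> \<rho> = n \<and> image_mset \<rho> (mset_set (rcells ?\<nu>)) = \<alpha>}"
  have "bij_betw (ribbon_filling lam D) ?A {\<rho> \<in> ?positive. \<rho> \<in> ssfillings ?\<nu> \<and> inv_llt ?\<nu> \<rho> = n
      \<and> image_mset \<rho> (mset_set (rcells ?\<nu>)) = \<alpha>}"
    using bij_betw_ribbon_filling
    by (rule bij_betw_Collect) (simp add: ssfillings_ribbon_filling_iff[OF assms(2)]
        inv_llt_ribbon_filling weight_ribbon_filling)
  moreover have "{\<rho> \<in> ?positive. \<rho> \<in> ssfillings ?\<nu> \<and> inv_llt ?\<nu> \<rho> = n
      \<and> image_mset \<rho> (mset_set (rcells ?\<nu>)) = \<alpha>} = ?B"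
    unfolding ssfillings_def by blast
  ultimately have "card ?A = card ?B"
    by (simp add: bij_betw_same_card)
  then show "F_series lam D \<alpha> n = G_series ?\<nu> \<alpha> n"
    unfolding F_series_def G_series_def .
qed

end
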